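(* Let $d,L$ be positive integers and let $w,v$ be type sequences having the same number of occurrences of `$+$' and the same number of occurrences of `$-$'. There is a bijection $\Psi_{w,v}$ from skew $(d,L)$-cylindric row-strict $w$-oscillating tableaux to skew $(d,L)$-cylindric row-strict $v$-oscillating tableaux that preserves inner shape, outer shape, $\mathrm{wt}^+$ and $\mathrm{wt}^-$, and commutes with reversal: $\Psi_{w^*,v^*}(T^{\mathrm{rev}})=\Psi_{w,v}(T)^{\mathrm{rev}}$ for all such $T$, where $u^*$ denotes $u$ reversed with `$+$' and `$-$' interchanged.
   Context: A $d$-staircase is an integer sequence $\lambda=(\lambda_1\ge\cdots\ge\lambda_d)$ (entries may be negative), $|\lambda|=\sum\lambda_i$; it is a $(d,L)$-staircase if $\lambda_1-\lambda_d\le L$. For $d$-staircases, $\lambda\prec'_{(d,L)}\mu$ means both are $(d,L)$-staircases and $\mu_i-\lambda_i\in\{0,1\}$ for all $1\le i\le d$. For $w=w_1\cdots w_k$, a skew $(d,L)$-cylindric row-strict $w$-oscillating tableau is a sequence of $d$-staircases $T=(\lambda^{(0)},\ldots,\lambda^{(k)})$ with $\lambda^{(i-1)}\prec'_{(d,L)}\lambda^{(i)}$ if $w_i=+$ and $\lambda^{(i)}\prec'_{(d,L)}\lambda^{(i-1)}$ if $w_i=-$. Its inner shape is $\lambda^{(0)}$, outer shape $\lambda^{(k)}$; $\mathrm{wt}^+(T)_i=|\lambda^{(a_i)}|-|\lambda^{(a_i-1)}|$ with $a_i$ the index of the $i$-th `$+$' in $w$; $\mathrm{wt}^-(T)_i=|\lambda^{(b_i-1)}|-|\lambda^{(b_i)}|$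 with $b_i$ the index of the $i$-th-to-last `$-$' in $w$. The reversal $T^{\mathrm{rev}}=(\lambda^{(k)},\ldots,\lambda^{(0)})$ is such a tableau of type $w^*$. *)

theory Defs
  imports Main
begin

text \<open>A d-staircase is a weakly decreasing integer list of length d.
  Type words are bool lists: True = '+', False = '-'.
  A tableau (lambda^(0),...,lambda^(k)) is a list of length k+1.\<close>

definition staircase :: "nat \<Rightarrow> int list \<Rightarrow> bool" where
  "staircase d lam \<longleftrightarrow> length lam = d \<and> sorted_wrt (\<ge>) lam"

definition dL_staircase :: "nat \<Rightarrow> nat \<Rightarrow> int list \<Rightarrow> bool" where
  "dL_staircase d L lam \<longleftrightarrow> staircase d lam \<and> lam ! 0 - lam ! (d - 1) \<le> int L"

definition prec_dL :: "nat \<Rightarrow> nat \<Rightarrow> int list \<Rightarrow> int list \<Rightarrow> bool" where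
  "prec_dL d L lam mu \<longleftrightarrow> dL_staircase d L lam \<and> dL_staircase d L mu \<and>
     (\<forall>i<d. mu ! i - lam ! i \<in> {0, 1})"

definition cyl_tableau :: "nat \<Rightarrow> nat \<Rightarrow> bool list \<Rightarrow> int list list \<Rightarrow> bool" where
  "cyl_tableau d L w T \<longleftrightarrow> length T = length w + 1 \<and> (\<forall>lam\<in>set T. staircase d lam) \<and>
     (\<forall>i<length w. if w ! i then prec_dL d L (T ! i) (T ! Suc i)
                               else prec_dL d L (T ! Suc i) (T ! i))"

definition tableaux :: "nat \<Rightarrow> nat \<Rightarrow> bool list \<Rightarrow> int list list set" where
  "tableaux d L w = {T. cyl_tableau d L w T}"

definition wt_plus :: "bool list \<Rightarrow> int list list \<Rightarrow> int list" where
  "wt_plus w T = [sum_list (T ! Suc j) - sum_list (T ! j). j \<leftarrow> [0..<length w], w ! j]"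

text \<open>wt^-: the i-th entry comes from the i-th-to-last '-' letter of w.\<close>
definition wt_minus :: "bool list \<Rightarrow> int list list \<Rightarrow> int list" where
  "wt_minus w T = rev [sum_list (T ! j) - sum_list (T ! Suc j). j \<leftarrow> [0..<length w], \<not> w ! j]"

definition word_star :: "bool list \<Rightarrow> bool list" where
  "word_star w = rev (map Not w)"

end

theory Submission
  imports Defs
begin

text \<open>The bijection is assembled from a local one. For \<open>(d,L)\<close>-staircases \<open>\<lambda>, \<nu>\<close>, the
  \<open>\<mu>\<close> with \<open>\<mu> \<prec> \<lambda>, \<mu> \<prec> \<nu>\<close> correspond bijectively to the \<open>\<mu>'\<close> with \<open>\<lambda> \<prec> \<mu>', \<nu> \<prec> \<mu>'\<close>,
  such that \<open>|\<mu>| + |\<mu>'| = |\<lambda>| + |\<nu>|\<close>: when the cylindric wrap-around plays no role, take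
  \<open>\<mu>' i = \<lambda> i + \<nu> i - \<mu> (r i)\<close>, where \<open>r\<close> reverses each run of constant \<open>\<lambda>\<^sub>i + \<nu>\<^sub>i\<close>.

  Applying the local bijection at every valley \<open>-+\<close> of the type word at once turns a
  \<open>w\<close>-tableau into a tableau whose type has all these letter pairs swapped to \<open>+-\<close>; the pairs
  (letter, size change) are swapped along, so the inner and outer shapes and both weights are
  preserved. Iterating sorts every type word into \<open>+\<dots>+-\<dots>-\<close>, and \<open>\<Psi>\<^sub>w\<^sub>,\<^sub>v\<close> is the sorting
  bijection for \<open>w\<close> followed by the inverse of the one for \<open>v\<close>. Reversal maps the valleys of
  \<open>w\<close> to those of \<open>w\<^sup>*\<close>, and the local bijection is symmetric in \<open>\<lambda>, \<nu>\<close>, so everything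
  commutes with reversal.\<close>

lemma staircase_iff_nth:
  "staircase d x \<longleftrightarrow> length x = d \<and> (\<forall>i. Suc i < d \<longrightarrow> x!Suc i \<le> x!i)"
proof -
  have "transp (\<lambda>a b::int. b \<le> a)" by (auto simp: transp_def)
  then show ?thesis
    unfolding staircase_def using sorted_wrt_iff_nth_Suc_transp[of "\<lambda>a b::int. b \<le> a" x] by auto
qed

lemma staircase_antimono: "staircase d x \<Longrightarrow> i \<le> j \<Longrightarrow> j < d \<Longrightarrow> x!j \<le> x!i"
  unfolding staircase_def using sorted_wrt_nth_less[of "\<lambda>a b::int. b \<le> a" x i j]
  by (cases "i = j") auto

lemma dL_staircase_iff_nth:
  "dL_staircase d L x \<longleftrightarrow>
     length x = d \<and> (\<forall>i. Suc i < d \<longrightarrow> x!Suc i \<le> x!i) \<and> x!0 - x!(d-1) \<le> int L"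
  by (auto simp: dL_staircase_def staircase_iff_nth)

lemma dL_staircase_length: "dL_staircase d L x \<Longrightarrow> length x = d"
  by (simp add: dL_staircase_def staircase_def)

lemma prec_dL_staircase: "prec_dL d L lam mu \<Longrightarrow> staircase d lam \<and> staircase d mu"
  unfolding prec_dL_def dL_staircase_def by auto

subsection \<open>Reflecting indices inside runs of an antitone sequence\<close>

definition run :: "(nat \<Rightarrow> int) \<Rightarrow> nat \<Rightarrow> nat \<Rightarrow> nat set" where
  "run K d i = {j. j < d \<and> K j = K i}"

definition run_reflect :: "(nat \<Rightarrow> int) \<Rightarrow> nat \<Rightarrow> nat \<Rightarrow> nat" where
  "run_reflect K d i = Min (run K d i) + Max (run K d i) - i"

locale antitone_below =
  fixes K :: "nat \<Rightarrow> int" and d :: nat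
  assumes antitone: "\<And>i j. i \<le> j \<Longrightarrow> j < d \<Longrightarrow> K j \<le> K i"
begin

lemma run_bounds:
  assumes "i < d"
  shows "Min (run K d i) \<le> i" "i \<le> Max (run K d i)" "Max (run K d i) < d"
    and "K (Min (run K d i)) = K i" "K (Max (run K d i)) = K i"
proof -
  have fin: "finite (run K d i)" and mem: "i \<in> run K d i"
    using assms unfolding run_def by auto
  then have "Min (run K d i) \<in> run K d i" "Max (run K d i) \<in> run K d i"
    using Min_in Max_in by blast+
  then show "Max (run K d i) < d" "K (Min (run K d i)) = K i" "K (Max (run K d i)) = K i"
    unfolding run_def by auto
  show "Min (run K d i) \<le> i" "i \<le> Max (run K d i)" using fin mem by auto
qed

lemma run_interval:
  assumes "i < d" "Min (run K d i) \<le> j" "j \<le> Max (run K d i)"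
  shows "K j = K i"
  using antitone[OF assms(2)] antitone[OF assms(3) run_bounds(3)[OF assms(1)]] run_bounds[OF assms(1)]
    assms by fastforce

lemma run_reflect_lt: "i < d \<Longrightarrow> run_reflect K d i < d"
  using run_bounds[of i] unfolding run_reflect_def by fastforce

lemma run_reflect_same_value: "i < d \<Longrightarrow> K (run_reflect K d i) = K i"
  using run_bounds[of i] by (intro run_interval) (auto simp: run_reflect_def)

lemma run_reflect_involutive:
  assumes "i < d"
  shows "run_reflect K d (run_reflect K d i) = i"
proof -
  have "run K d (run_reflect K d i) = run K d i"
    using run_reflect_same_value[OF assms] by (simp add: run_def)
  then show ?thesis using run_bounds(1,2)[OF assms] by (simp add: run_reflect_def)
qed

lemma run_reflect_Suc:
  assumes "Suc i < d" "K (Suc i) = K i"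
  shows "run_reflect K d (Suc i) + 1 = run_reflect K d i"
proof -
  have "run K d (Suc i) = run K d i" using assms(2) by (simp add: run_def)
  then show ?thesis
    using run_bounds[of "Suc i"] run_bounds[of i] assms(1) unfolding run_reflect_def by simp
qed

lemma bij_betw_run_reflect: "bij_betw (run_reflect K d) {..<d} {..<d}"
  by (rule bij_betw_byWitness[where f'="run_reflect K d"])
     (auto simp: run_reflect_involutive run_reflect_lt)

end

subsection \<open>The local bijection\<close>

text \<open>For \<open>e = 1\<close> and \<open>e = 0\<close> the band consists of the staircases below, resp. above, both
  \<open>\<lambda>\<close> and \<open>\<nu>\<close>; keeping \<open>e\<close> as a parameter lets one argument handle both directions.\<close>

definition band :: "nat \<Rightarrow> nat \<Rightarrow> int \<Rightarrow> int list \<Rightarrow> int list \<Rightarrow> int list set" where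
  "band d L e lam nu = {mu. dL_staircase d L mu \<and>
     (\<forall>i<d. max (lam!i) (nu!i) - e \<le> mu!i \<and> mu!i \<le> min (lam!i) (nu!i) + 1 - e)}"

lemma band_symmetric: "band d L e lam nu = band d L e nu lam"
  unfolding band_def by (simp add: max.commute min.commute)

lemma band_length: "mu \<in> band d L e lam nu \<Longrightarrow> length mu = d"
  unfolding band_def using dL_staircase_length by blast

lemma mem_band_lower_iff:
  assumes "dL_staircase d L lam" "dL_staircase d L nu"
  shows "mu \<in> band d L 1 lam nu \<longleftrightarrow> prec_dL d L mu lam \<and> prec_dL d L mu nu"
  using assms unfolding band_def prec_dL_def by force

lemma mem_band_upper_iff:
  assumes "dL_staircase d L lam" "dL_staircase d L nu"
  shows "mu \<in> band d L 0 lam nu \<longleftrightarrow> prec_dL d L lam mu \<and> prec_dL d L nu mu"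
  using assms unfolding band_def prec_dL_def by force

definition complement_bij :: "int list set \<Rightarrow> int list set \<Rightarrow> int \<Rightarrow> (int list \<Rightarrow> int list) \<Rightarrow> bool" where
  "complement_bij A B s g \<longleftrightarrow> bij_betw g A B \<and> (\<forall>mu\<in>A. sum_list (g mu) = s - sum_list mu)"

definition narrow :: "nat \<Rightarrow> nat \<Rightarrow> int list \<Rightarrow> int list \<Rightarrow> bool" where
  "narrow d L lam nu \<longleftrightarrow> min (lam!0) (nu!0) - min (lam!(d-1)) (nu!(d-1)) < int L"

definition run_complement :: "nat \<Rightarrow> int list \<Rightarrow> int list \<Rightarrow> int list \<Rightarrow> int list" where
  "run_complement d lam nu mu =
     map (\<lambda>i. lam!i + nu!i - mu!(run_reflect (\<lambda>i. lam!i + nu!i) d i)) [0..<d]"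

locale narrow_pair =
  fixes d L :: nat and lam nu :: "int list"
  assumes d_pos: "d > 0"
    and lam: "dL_staircase d L lam" and nu: "dL_staircase d L nu"
    and narrow: "narrow d L lam nu"
begin

abbreviation K where "K i \<equiv> lam!i + nu!i"
abbreviation r where "r \<equiv> run_reflect K d"

lemma lam_antimono: "i \<le> j \<Longrightarrow> j < d \<Longrightarrow> lam!j \<le> lam!i"
  and nu_antimono: "i \<le> j \<Longrightarrow> j < d \<Longrightarrow> nu!j \<le> nu!i"
  using staircase_antimono lam nu unfolding dL_staircase_def by blast+

sublocale antitone_below K d
  by unfold_locales (intro add_mono lam_antimono nu_antimono; assumption)

lemma same_value_same_entries:
  assumes "i < d" "j < d" "K i = K j"
  shows "lam!i = lam!j \<and> nu!i = nu!j"
  using assms lam_antimono[of i j] nu_antimono[of i j] lam_antimono[of j i] nu_antimono[of j i]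
  by (cases "i \<le> j") auto

lemma reflect_preserves_entries:
  "i < d \<Longrightarrow> r i < d \<and> lam!(r i) = lam!i \<and> nu!(r i) = nu!i \<and> r (r i) = i"
  using same_value_same_entries[of i "r i"] run_reflect_lt run_reflect_same_value
    run_reflect_involutive by auto

lemma run_complement_nth: "i < d \<Longrightarrow> run_complement d lam nu mu ! i = K i - mu!(r i)"
  by (simp add: run_complement_def)

lemma run_complement_length: "length (run_complement d lam nu mu) = d"
  by (simp add: run_complement_def)

lemma run_complement_involutive:
  "length mu = d \<Longrightarrow> run_complement d lam nu (run_complement d lam nu mu) = mu"
  by (rule nth_equalityI) (auto simp: run_complement_length run_complement_nth reflect_preserves_entries)

lemma run_complement_band:
  assumes mu: "mu \<in> band d L e lam nu"
  shows "run_complement d lam nu mu \<in> band d L (1 - e) lam nu"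
proof -
  let ?p = "run_complement d lam nu mu"
  have mu_bounds: "max (lam!i) (nu!i) - e \<le> mu!i \<and> mu!i \<le> min (lam!i) (nu!i) + 1 - e"
    if "i < d" for i
    using mu that unfolding band_def by blast
  have mu_dec: "mu!Suc i \<le> mu!i" if "Suc i < d" for i
    using mu that unfolding band_def dL_staircase_iff_nth by blast
  have bounds: "max (lam!i) (nu!i) - (1 - e) \<le> ?p!i \<and> ?p!i \<le> min (lam!i) (nu!i) + 1 - (1 - e)"
    if i: "i < d" for i
    using mu_bounds[of "r i"] reflect_preserves_entries[OF i] i by (auto simp: run_complement_nth)
  have dec: "?p!Suc i \<le> ?p!i" if i: "Suc i < d" for i
  proof (cases "K (Suc i) = K i")
    case True
    \<comment> \<open>inside a run the reflection reverses the order of the indices\<close>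
    then have "r i = Suc (r (Suc i))" using run_reflect_Suc[OF i] by simp
    then show ?thesis
      using mu_dec[of "r (Suc i)"] reflect_preserves_entries[of i] True i by (simp add: run_complement_nth)
  next
    case False
    then have "lam!Suc i < lam!i \<or> nu!Suc i < nu!i"
      using lam_antimono[of i "Suc i"] nu_antimono[of i "Suc i"] i by fastforce
    then show ?thesis
      using bounds[of i] bounds[of "Suc i"] lam_antimono[of i "Suc i"] nu_antimono[of i "Suc i"] i
      by (auto simp: max_def min_def split: if_splits)
  qed
  have "?p!0 - ?p!(d-1) \<le> int L"
    using bounds[of 0] bounds[of "d-1"] narrow d_pos unfolding narrow_def by linarith
  then show ?thesis
    using bounds dec unfolding band_def by (simp add: dL_staircase_iff_nth run_complement_length)
qed

lemma sum_run_complement: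
  assumes "length mu = d"
  shows "sum_list (run_complement d lam nu mu) = sum_list lam + sum_list nu - sum_list mu"
proof -
  have len: "length lam = d" "length nu = d" using lam nu dL_staircase_length by auto
  have "sum_list (run_complement d lam nu mu) = (\<Sum>i<d. K i - mu!(r i))"
    by (simp add: sum_list_sum_nth run_complement_length run_complement_nth atLeast0LessThan)
  also have "\<dots> = (\<Sum>i<d. K i) - (\<Sum>i<d. mu!(r i))" by (simp add: sum_subtractf)
  also have "(\<Sum>i<d. mu!(r i)) = (\<Sum>i<d. mu!i)"
    using sum.reindex_bij_betw[OF bij_betw_run_reflect] by simp
  finally show ?thesis
    using assms len by (simp add: sum.distrib sum_list_sum_nth atLeast0LessThan)
qed

lemma complement_bij_run_complement:
  "complement_bij (band d L 1 lam nu) (band d L 0 lam nu) (sum_list lam + sum_list nu)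
     (run_complement d lam nu)"
  unfolding complement_bij_def
proof
  show "bij_betw (run_complement d lam nu) (band d L 1 lam nu) (band d L 0 lam nu)"
    using run_complement_band[of _ 1] run_complement_band[of _ 0]
    by (intro bij_betw_byWitness[where f'="run_complement d lam nu"])
       (auto simp: run_complement_involutive band_length)
qed (simp add: sum_run_complement band_length)

end

subsection \<open>Cylindric rotation\<close>

definition cyl_rot :: "nat \<Rightarrow> int list \<Rightarrow> int list" where
  "cyl_rot L x = tl x @ [hd x - int L]"

definition cyl_unrot :: "nat \<Rightarrow> int list \<Rightarrow> int list" where
  "cyl_unrot L x = (last x + int L) # butlast x"

lemma length_cyl_rot [simp]: "x \<noteq> [] \<Longrightarrow> length (cyl_rot L x) = length x"
  by (simp add: cyl_rot_def)

lemma length_cyl_unrot [simp]: "x \<noteq> [] \<Longrightarrow> length (cyl_unrot L x) = length x"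
  by (simp add: cyl_unrot_def)

lemma cyl_unrot_rot: "x \<noteq> [] \<Longrightarrow> cyl_unrot L (cyl_rot L x) = x"
  by (cases x) (auto simp: cyl_rot_def cyl_unrot_def)

lemma cyl_rot_unrot: "x \<noteq> [] \<Longrightarrow> cyl_rot L (cyl_unrot L x) = x"
  by (auto simp: cyl_rot_def cyl_unrot_def)

lemma sum_cyl_rot: "x \<noteq> [] \<Longrightarrow> sum_list (cyl_rot L x) = sum_list x - int L"
  by (cases x) (auto simp: cyl_rot_def)

lemma cyl_rot_nth:
  "i < length x \<Longrightarrow> cyl_rot L x ! i = (if Suc i < length x then x!Suc i else x!0 - int L)"
  by (cases x) (auto simp: cyl_rot_def nth_append)

text \<open>A list is a \<open>(d,L)\<close>-staircase iff it stays weakly decreasing when its first entry,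
  lowered by \<open>L\<close>, is appended; in this form invariance under rotation is plain.\<close>

lemma dL_staircase_iff_sorted_cyl:
  assumes "length x = d" "d > 0"
  shows "dL_staircase d L x \<longleftrightarrow> sorted_wrt (\<ge>) (x @ [hd x - int L])"
proof -
  have ends: "hd x = x!0" "last x = x!(d-1)"
    using assms by (auto simp: hd_conv_nth last_conv_nth)
  have "(\<forall>a\<in>set x. hd x - int L \<le> a) \<longleftrightarrow> x!0 - x!(d-1) \<le> int L"
    if st: "staircase d x"
  proof
    assume "\<forall>a\<in>set x. hd x - int L \<le> a"
    moreover have "last x \<in> set x" using assms by auto
    ultimately show "x!0 - x!(d-1) \<le> int L" using ends by fastforce
  next
    assume spread: "x!0 - x!(d-1) \<le> int L"
    show "\<forall>a\<in>set x. hd x - int L \<le> a"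
    proof
      fix a assume "a \<in> set x"
      then obtain i where "i < d" "a = x!i" using assms by (auto simp: in_set_conv_nth)
      then show "hd x - int L \<le> a"
        using staircase_antimono[OF st, of i "d-1"] spread ends by fastforce
    qed
  qed
  then show ?thesis
    using assms by (auto simp: dL_staircase_def staircase_def sorted_wrt_append)
qed

lemma sorted_cyl_rot:
  "x \<noteq> [] \<Longrightarrow>
   sorted_wrt (\<ge>) (cyl_rot L x @ [hd (cyl_rot L x) - int L]) \<longleftrightarrow> sorted_wrt (\<ge>) (x @ [hd x - int L])"
  by (cases x; cases "tl x") (auto simp: cyl_rot_def sorted_wrt_append)

lemma dL_staircase_cyl_rot:
  assumes "length x = d" "d > 0"
  shows "dL_staircase d L (cyl_rot L x) \<longleftrightarrow> dL_staircase d L x"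
  using assms sorted_cyl_rot[of x L] dL_staircase_iff_sorted_cyl[OF _ assms(2)] by auto

lemma all_nth_cyl_rot_iff:
  assumes len: "length x = d" "length y = d" "length z = d" "d > 0"
    and shift: "\<And>a b c. P (a - int L) (b - int L) (c - int L) = P a b c"
  shows "(\<forall>i<d. P (cyl_rot L x!i) (cyl_rot L y!i) (cyl_rot L z!i)) \<longleftrightarrow> (\<forall>i<d. P (x!i) (y!i) (z!i))"
proof
  assume H: "\<forall>i<d. P (cyl_rot L x!i) (cyl_rot L y!i) (cyl_rot L z!i)"
  show "\<forall>i<d. P (x!i) (y!i) (z!i)"
  proof (intro allI impI)
    fix i assume "i < d"
    then show "P (x!i) (y!i) (z!i)"
      using H[rule_format, of "d-1"] H[rule_format, of "i-1"] len
      by (cases i) (auto simp: cyl_rot_nth shift)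
  qed
next
  assume H: "\<forall>i<d. P (x!i) (y!i) (z!i)"
  show "\<forall>i<d. P (cyl_rot L x!i) (cyl_rot L y!i) (cyl_rot L z!i)"
    using H[rule_format, of "Suc _"] H[rule_format, of 0] len by (auto simp: cyl_rot_nth shift)
qed

lemma cyl_rot_mem_band_iff:
  assumes len: "length lam = d" "length nu = d" "length mu = d" and "d > 0"
  shows "cyl_rot L mu \<in> band d L e (cyl_rot L lam) (cyl_rot L nu) \<longleftrightarrow> mu \<in> band d L e lam nu"
proof -
  have "(\<forall>i<d. max (cyl_rot L lam!i) (cyl_rot L nu!i) - e \<le> cyl_rot L mu!i \<and>
          cyl_rot L mu!i \<le> min (cyl_rot L lam!i) (cyl_rot L nu!i) + 1 - e) \<longleftrightarrow>
        (\<forall>i<d. max (lam!i) (nu!i) - e \<le> mu!i \<and> mu!i \<le> min (lam!i) (nu!i) + 1 - e)"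
    using assms by (intro all_nth_cyl_rot_iff) (auto simp: max_def min_def)
  then show ?thesis using dL_staircase_cyl_rot[OF len(3) assms(4)] by (simp add: band_def)
qed

lemma bij_betw_cyl_rot_band:
  fixes lam nu :: "int list" and d L :: nat and e :: int
  assumes len: "length lam = d" "length nu = d" and d: "d > 0"
  defines "B \<equiv> band d L e (cyl_rot L lam) (cyl_rot L nu)"
  shows "bij_betw (cyl_rot L) (band d L e lam nu) B \<and> bij_betw (cyl_unrot L) B (band d L e lam nu)"
proof -
  have ne: "mu \<noteq> []" if "mu \<in> band d L e' lam' nu'" for mu e' lam' nu'
    using band_length[OF that] d by auto
  have "\<forall>mu\<in>band d L e lam nu. cyl_unrot L (cyl_rot L mu) = mu"
    using ne cyl_unrot_rot by blast
  moreover have "\<forall>mu\<in>B. cyl_rot L (cyl_unrot L mu) = mu"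
    using ne cyl_rot_unrot unfolding B_def by blast
  moreover have "cyl_rot L ` band d L e lam nu \<subseteq> B"
    using cyl_rot_mem_band_iff[OF len _ d] band_length unfolding B_def by blast
  moreover have "cyl_unrot L ` B \<subseteq> band d L e lam nu"
  proof
    fix mu assume "mu \<in> cyl_unrot L ` B"
    then obtain mu' where mu': "mu' \<in> B" "mu = cyl_unrot L mu'" by blast
    then have "length mu = d" "cyl_rot L mu = mu'"
      using ne[of mu'] band_length[of mu'] cyl_rot_unrot unfolding B_def by auto
    then show "mu \<in> band d L e lam nu"
      using cyl_rot_mem_band_iff[OF len _ d] mu'(1) unfolding B_def by blast
  qed
  ultimately show ?thesis by (auto intro: bij_betw_byWitness)
qed

lemma complement_bij_of_cyl_rot:
  assumes len: "length lam = d" "length nu = d" and d: "d > 0"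
    and "complement_bij (band d L 1 (cyl_rot L lam) (cyl_rot L nu)) (band d L 0 (cyl_rot L lam) (cyl_rot L nu))
           (sum_list (cyl_rot L lam) + sum_list (cyl_rot L nu)) g"
  shows "complement_bij (band d L 1 lam nu) (band d L 0 lam nu) (sum_list lam + sum_list nu)
           (cyl_unrot L \<circ> g \<circ> cyl_rot L)"
  unfolding complement_bij_def
proof
  have rot_low: "bij_betw (cyl_rot L) (band d L 1 lam nu) (band d L 1 (cyl_rot L lam) (cyl_rot L nu))"
    and unrot_up: "bij_betw (cyl_unrot L) (band d L 0 (cyl_rot L lam) (cyl_rot L nu)) (band d L 0 lam nu)"
    using bij_betw_cyl_rot_band[OF len d] by blast+
  have g: "bij_betw g (band d L 1 (cyl_rot L lam) (cyl_rot L nu)) (band d L 0 (cyl_rot L lam) (cyl_rot L nu))"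
    using assms(4) unfolding complement_bij_def by blast
  show "bij_betw (cyl_unrot L \<circ> g \<circ> cyl_rot L) (band d L 1 lam nu) (band d L 0 lam nu)"
    using bij_betw_trans[OF bij_betw_trans[OF rot_low g] unrot_up] by (simp add: comp_assoc)
  show "\<forall>mu\<in>band d L 1 lam nu. sum_list ((cyl_unrot L \<circ> g \<circ> cyl_rot L) mu) = sum_list lam + sum_list nu - sum_list mu"
  proof
    fix mu assume mu: "mu \<in> band d L 1 lam nu"
    let ?mu' = "g (cyl_rot L mu)"
    have "?mu' \<in> band d L 0 (cyl_rot L lam) (cyl_rot L nu)"
      using mu rot_low g by (meson bij_betwE)
    then have ne: "mu \<noteq> []" "?mu' \<noteq> []" "lam \<noteq> []" "nu \<noteq> []"
      using band_length[OF mu] band_length len d by fastforce+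
    have "sum_list ?mu' = sum_list (cyl_rot L lam) + sum_list (cyl_rot L nu) - sum_list (cyl_rot L mu)"
      using assms(4) mu rot_low unfolding complement_bij_def by (meson bij_betwE)
    moreover have "sum_list ?mu' = sum_list (cyl_unrot L ?mu') - int L"
      using sum_cyl_rot[of "cyl_unrot L ?mu'" L] cyl_rot_unrot[OF ne(2)] by (simp add: cyl_unrot_def)
    ultimately show "sum_list ((cyl_unrot L \<circ> g \<circ> cyl_rot L) mu) = sum_list lam + sum_list nu - sum_list mu"
      using ne by (simp add: sum_cyl_rot)
  qed
qed

lemma cyl_rot_funpow:
  "k \<le> length x \<Longrightarrow> (cyl_rot L ^^ k) x = drop k x @ map (\<lambda>a. a - int L) (take k x)"
proof (induction k)
  case (Suc k)
  then have "drop k x \<noteq> []" by simp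
  with Suc show ?case
    by (simp add: cyl_rot_def hd_drop_conv_nth tl_drop drop_Suc take_Suc_conv_app_nth)
qed simp

lemma length_cyl_rot_funpow: "k \<le> length x \<Longrightarrow> length ((cyl_rot L ^^ k) x) = length x"
  by (simp add: cyl_rot_funpow)

lemma dL_staircase_cyl_rot_funpow:
  assumes "length x = d" "d > 0" "k \<le> d"
  shows "dL_staircase d L ((cyl_rot L ^^ k) x) \<longleftrightarrow> dL_staircase d L x"
  using assms(3)
proof (induction k)
  case (Suc k)
  then show ?case
    using dL_staircase_cyl_rot[of "(cyl_rot L ^^ k) x" d L] assms by (simp add: length_cyl_rot_funpow)
qed simp

lemma complement_bij_of_cyl_rot_funpow:
  assumes "length lam = d" "length nu = d" "d > 0" "k \<le> d"
    and "\<exists>g. complement_bij (band d L 1 ((cyl_rot L ^^ k) lam) ((cyl_rot L ^^ k) nu))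
           (band d L 0 ((cyl_rot L ^^ k) lam) ((cyl_rot L ^^ k) nu))
           (sum_list ((cyl_rot L ^^ k) lam) + sum_list ((cyl_rot L ^^ k) nu)) g"
  shows "\<exists>g. complement_bij (band d L 1 lam nu) (band d L 0 lam nu) (sum_list lam + sum_list nu) g"
  using assms
proof (induction k)
  case (Suc k)
  have "length ((cyl_rot L ^^ k) lam) = d" "length ((cyl_rot L ^^ k) nu) = d"
    using Suc.prems by (simp_all add: length_cyl_rot_funpow)
  then show ?case
    using Suc complement_bij_of_cyl_rot[of "(cyl_rot L ^^ k) lam" d "(cyl_rot L ^^ k) nu" L] by auto
qed simp

text \<open>With \<open>m\<^sub>j = min \<lambda>\<^sub>j \<nu>\<^sub>j\<close>, rotating by \<open>0 < k < d\<close> makes \<open>m\<^sub>k\<close> the first and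
  \<open>m\<^sub>k\<^sub>-\<^sub>1 - L\<close> the last entry of the componentwise minimum, so narrowness means
  \<open>m\<^sub>k < m\<^sub>k\<^sub>-\<^sub>1\<close>. If that fails for all such \<open>k\<close>, then \<open>m\<close> is weakly increasing and
  no rotation is needed.\<close>

lemma narrow_cyl_rot_funpow_exists:
  assumes len: "length lam = d" "length nu = d" and "d > 0" "L > 0"
  shows "\<exists>k<d. narrow d L ((cyl_rot L ^^ k) lam) ((cyl_rot L ^^ k) nu)"
proof (rule ccontr)
  define m where "m j = min (lam!j) (nu!j)" for j
  assume not_narrow: "\<not> (\<exists>k<d. narrow d L ((cyl_rot L ^^ k) lam) ((cyl_rot L ^^ k) nu))"
  have first: "(cyl_rot L ^^ k) x ! 0 = x!k" and last: "(cyl_rot L ^^ k) x ! (d-1) = x!(k-1) - int L"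
    if "length x = d" "0 < k" "k < d" for x k
    using that by (auto simp: cyl_rot_funpow nth_append min_def)
  have step: "m (k-1) \<le> m k" if "0 < k" "k < d" for k
    using not_narrow first[OF len(1) that] first[OF len(2) that] last[OF len(1) that]
      last[OF len(2) that] that
    unfolding narrow_def m_def by (auto simp: min_def)
  have "m 0 \<le> m j" if "j < d" for j
    using that step[of j] by (induction j) (use step in fastforce)+
  then have "m 0 \<le> m (d-1)" using assms by simp
  moreover have "\<not> m 0 - m (d-1) < int L"
    using not_narrow assms unfolding narrow_def m_def by fastforce
  ultimately show False using assms by linarith
qed

lemma complement_bij_exists:
  assumes "d > 0" "L > 0" "dL_staircase d L lam" "dL_staircase d L nu"
  shows "\<exists>g. complement_bij (band d L 1 lam nu) (band d L 0 lam nu) (sum_list lam + sum_list nu) g"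
proof -
  have len: "length lam = d" "length nu = d" using assms dL_staircase_length by auto
  obtain k where k: "k < d" "narrow d L ((cyl_rot L ^^ k) lam) ((cyl_rot L ^^ k) nu)"
    using narrow_cyl_rot_funpow_exists[OF len assms(1,2)] by blast
  interpret narrow_pair d L "(cyl_rot L ^^ k) lam" "(cyl_rot L ^^ k) nu"
    using assms k len dL_staircase_cyl_rot_funpow by unfold_locales auto
  show ?thesis
    using complement_bij_of_cyl_rot_funpow[OF len assms(1), of k] complement_bij_run_complement k(1)
    by fastforce
qed

text \<open>Choosing through a predicate that is symmetric in \<open>\<lambda>, \<nu>\<close> makes \<open>local_bij\<close> itself
  symmetric, which is what compatibility with reversal needs.\<close>

definition local_bij :: "nat \<Rightarrow> nat \<Rightarrow> int list \<Rightarrow> int list \<Rightarrow> int list \<Rightarrow> int list" where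
  "local_bij d L lam nu =
     (SOME g. complement_bij (band d L 1 lam nu) (band d L 0 lam nu) (sum_list lam + sum_list nu) g)"

definition local_bij_inv :: "nat \<Rightarrow> nat \<Rightarrow> int list \<Rightarrow> int list \<Rightarrow> int list \<Rightarrow> int list" where
  "local_bij_inv d L lam nu = inv_into (band d L 1 lam nu) (local_bij d L lam nu)"

lemma local_bij_symmetric: "local_bij d L lam nu = local_bij d L nu lam"
  unfolding local_bij_def by (simp add: band_symmetric add.commute)

context
  fixes d L :: nat
  assumes d_pos: "d > 0" and L_pos: "L > 0"
begin

lemma complement_bij_local_bij:
  assumes "dL_staircase d L lam" "dL_staircase d L nu"
  shows "complement_bij (band d L 1 lam nu) (band d L 0 lam nu) (sum_list lam + sum_list nu)
    (local_bij d L lam nu)"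
  unfolding local_bij_def using complement_bij_exists[OF d_pos L_pos assms] by (rule someI_ex)

lemma bij_betw_local_bij:
  assumes "dL_staircase d L lam" "dL_staircase d L nu"
  shows "bij_betw (local_bij d L lam nu) (band d L 1 lam nu) (band d L 0 lam nu)"
  using complement_bij_local_bij[OF assms] unfolding complement_bij_def by blast

lemma local_bij_upper:
  assumes "prec_dL d L mu lam" "prec_dL d L mu nu"
  shows "prec_dL d L lam (local_bij d L lam nu mu) \<and> prec_dL d L nu (local_bij d L lam nu mu)"
proof -
  have "dL_staircase d L lam" "dL_staircase d L nu" using assms by (simp_all add: prec_dL_def)
  then show ?thesis
    using assms bij_betwE[OF bij_betw_local_bij] mem_band_lower_iff mem_band_upper_iff by metis
qed

lemma sum_local_bij:
  assumes "prec_dL d L mu lam" "prec_dL d L mu nu"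
  shows "sum_list (local_bij d L lam nu mu) = sum_list lam + sum_list nu - sum_list mu"
proof -
  have "dL_staircase d L lam" "dL_staircase d L nu" using assms by (simp_all add: prec_dL_def)
  then show ?thesis
    using assms complement_bij_local_bij mem_band_lower_iff unfolding complement_bij_def by blast
qed

lemma local_bij_inv_lower:
  assumes "prec_dL d L lam mu" "prec_dL d L nu mu"
  shows "prec_dL d L (local_bij_inv d L lam nu mu) lam \<and> prec_dL d L (local_bij_inv d L lam nu mu) nu"
proof -
  have "dL_staircase d L lam" "dL_staircase d L nu" using assms by (simp_all add: prec_dL_def)
  then show ?thesis
    using assms bij_betwE[OF bij_betw_inv_into[OF bij_betw_local_bij]] mem_band_lower_iff
      mem_band_upper_iff
    unfolding local_bij_inv_def by metis
qed

lemma local_bij_inv_local_bij: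
  assumes "prec_dL d L mu lam" "prec_dL d L mu nu"
  shows "local_bij_inv d L lam nu (local_bij d L lam nu mu) = mu"
proof -
  have "dL_staircase d L lam" "dL_staircase d L nu" using assms by (simp_all add: prec_dL_def)
  then show ?thesis
    using assms bij_betw_inv_into_left[OF bij_betw_local_bij] mem_band_lower_iff
    unfolding local_bij_inv_def by metis
qed

lemma local_bij_local_bij_inv:
  assumes "prec_dL d L lam mu" "prec_dL d L nu mu"
  shows "local_bij d L lam nu (local_bij_inv d L lam nu mu) = mu"
proof -
  have "dL_staircase d L lam" "dL_staircase d L nu" using assms by (simp_all add: prec_dL_def)
  then show ?thesis
    using assms bij_betw_inv_into_right[OF bij_betw_local_bij] mem_band_upper_iff
    unfolding local_bij_inv_def by metis
qed

end

subsection \<open>Swapping valleys\<close>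

fun swap_pass :: "('a \<Rightarrow> bool) \<Rightarrow> 'a list \<Rightarrow> 'a list" where
  "swap_pass P (x # y # r) = (if \<not> P x \<and> P y then y # x # swap_pass P r else x # swap_pass P (y # r))"
| "swap_pass P xs = xs"

definition swap_pos :: "('a \<Rightarrow> bool) \<Rightarrow> 'a list \<Rightarrow> nat \<Rightarrow> bool" where
  "swap_pos P xs j \<longleftrightarrow> 0 < j \<and> j < length xs \<and> \<not> P (xs!(j-1)) \<and> P (xs!j)"

lemma swap_pos_0 [simp]: "\<not> swap_pos P xs 0"
  by (simp add: swap_pos_def)

lemma swap_pos_Cons_Suc:
  "swap_pos P (x # xs) (Suc i) \<longleftrightarrow> (if i = 0 then xs \<noteq> [] \<and> \<not> P x \<and> P (hd xs) else swap_pos P xs i)"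
  by (cases xs; cases i) (auto simp: swap_pos_def nth_Cons')

lemma swap_pos_nth_pred: "swap_pos P xs i \<Longrightarrow> (x # xs) ! i = xs ! (i - 1)"
  by (cases i) (auto simp: swap_pos_def)

lemma swap_pass_nth:
  "j < length xs \<Longrightarrow> swap_pass P xs ! j =
     (if swap_pos P xs (Suc j) then xs!Suc j else if swap_pos P xs j then xs!(j-1) else xs!j)"
proof (induction P xs arbitrary: j rule: swap_pass.induct)
  case (1 P x y r)
  show ?case
  proof (cases "\<not> P x \<and> P y")
    case True
    consider "j = 0" | "j = 1" | i where "j = Suc (Suc i)"
      by (cases j rule: nat.exhaust; cases "j - 1" rule: nat.exhaust) auto
    then show ?thesis
    proof cases
      case 3
      have "i < length r" using "1.prems" 3 by simp
      moreover have "swap_pos P (x # y # r) (Suc j) = swap_pos P r (Suc i)"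
        "swap_pos P (x # y # r) j = swap_pos P r i"
        using True 3 by (cases i; simp add: swap_pos_Cons_Suc)+
      ultimately show ?thesis
        using "1.IH"(1)[OF True, of i] True 3 swap_pos_nth_pred[of P r i y] by simp
    qed (use True in \<open>simp_all add: swap_pos_Cons_Suc\<close>)
  next
    case False
    show ?thesis
    proof (cases j)
      case (Suc i)
      have "i < length (y # r)" using "1.prems" Suc by simp
      moreover have "swap_pos P (x # y # r) (Suc j) = swap_pos P (y # r) (Suc i)"
        "swap_pos P (x # y # r) j = swap_pos P (y # r) i"
        using False Suc by (cases i; simp add: swap_pos_Cons_Suc)+
      moreover have "swap_pass P (x # y # r) ! j = swap_pass P (y # r) ! i"
        using Suc by (simp only: swap_pass.simps(1) if_not_P[OF False] nth_Cons_Suc)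
      ultimately show ?thesis
        using "1.IH"(2)[OF False, of i] Suc swap_pos_nth_pred[of P "y # r" i x]
        by (simp del: swap_pass.simps)
    qed (use False in \<open>auto simp: swap_pos_Cons_Suc\<close>)
  qed
qed (auto simp: swap_pos_def)

lemma length_swap_pass [simp]: "length (swap_pass P xs) = length xs"
  by (induction P xs rule: swap_pass.induct) auto

lemma filter_swap_pass: "filter P (swap_pass P xs) = filter P xs"
  by (induction P xs rule: swap_pass.induct) auto

lemma filter_not_swap_pass: "filter (\<lambda>x. \<not> P x) (swap_pass P xs) = filter (\<lambda>x. \<not> P x) xs"
  by (induction P xs rule: swap_pass.induct) auto

lemma count_list_swap_pass: "count_list (swap_pass P xs) a = count_list xs a"
  by (induction P xs rule: swap_pass.induct) auto

lemma swap_pos_not_adjacent: "\<not> (swap_pos P xs j \<and> swap_pos P xs (Suc j))"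
  by (auto simp: swap_pos_def)

abbreviation swap_word :: "bool list \<Rightarrow> bool list" where
  "swap_word \<equiv> swap_pass (\<lambda>b. b)"

text \<open>At a valley \<open>j\<close> of \<open>w\<close> the letters \<open>w\<^sub>j\<^sub>-\<^sub>1 w\<^sub>j\<close> read \<open>-+\<close>, so the entry \<open>T!j\<close>
  of a \<open>w\<close>-tableau lies below both of its neighbours.\<close>

abbreviation valley :: "bool list \<Rightarrow> nat \<Rightarrow> bool" where
  "valley \<equiv> swap_pos (\<lambda>b. b)"

lemma swap_word_nth:
  "j < length w \<Longrightarrow> swap_word w ! j = (if valley w (Suc j) then True else if valley w j then False else w!j)"
  using swap_pass_nth[of j w "\<lambda>b. b"] by (auto simp: swap_pos_def)

lemma valley_bounds: "valley w j \<Longrightarrow> 0 < j \<and> j < length w"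
  by (simp add: swap_pos_def)

lemma valley_letters: "valley w j \<Longrightarrow> \<not> w!(j-1) \<and> w!j"
  by (simp add: swap_pos_def)

definition tableau_step :: "nat \<Rightarrow> nat \<Rightarrow> bool \<Rightarrow> int list \<Rightarrow> int list \<Rightarrow> bool" where
  "tableau_step d L b lam mu \<longleftrightarrow> (if b then prec_dL d L lam mu else prec_dL d L mu lam)"

lemma tableau_step_staircase: "tableau_step d L b lam mu \<Longrightarrow> staircase d lam \<and> staircase d mu"
  unfolding tableau_step_def using prec_dL_staircase by (auto split: if_splits)

lemma mem_tableaux_iff:
  "T \<in> tableaux d L w \<longleftrightarrow> length T = Suc (length w) \<and> (\<forall>j<length T. staircase d (T!j)) \<and>
     (\<forall>i<length w. tableau_step d L (w!i) (T!i) (T!Suc i))"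
  unfolding tableaux_def cyl_tableau_def tableau_step_def by (auto simp: all_set_conv_all_nth)

lemma rev_mem_tableaux:
  assumes "T \<in> tableaux d L w"
  shows "rev T \<in> tableaux d L (word_star w)"
proof -
  have len: "length T = Suc (length w)" using assms by (simp add: mem_tableaux_iff)
  have "tableau_step d L (word_star w ! i) (rev T ! i) (rev T ! Suc i)" if "i < length w" for i
  proof -
    define k where "k = length w - Suc i"
    have "k < length w" "rev T ! i = T ! Suc k" "rev T ! Suc i = T ! k" "word_star w ! i = (\<not> w!k)"
      using that len unfolding k_def by (auto simp: rev_nth word_star_def Suc_diff_Suc)
    then show ?thesis using assms by (auto simp: mem_tableaux_iff tableau_step_def)
  qed
  then show ?thesis using assms by (auto simp: mem_tableaux_iff rev_nth word_star_def)
qed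

definition update_valleys ::
  "(int list \<Rightarrow> int list \<Rightarrow> int list \<Rightarrow> int list) \<Rightarrow> bool list \<Rightarrow> int list list \<Rightarrow> int list list" where
  "update_valleys f w T = map (\<lambda>j. if valley w j then f (T!(j-1)) (T!Suc j) (T!j) else T!j) [0..<length T]"

lemma length_update_valleys [simp]: "length (update_valleys f w T) = length T"
  by (simp add: update_valleys_def)

lemma update_valleys_nth:
  "j < length T \<Longrightarrow> update_valleys f w T ! j = (if valley w j then f (T!(j-1)) (T!Suc j) (T!j) else T!j)"
  by (simp add: update_valleys_def)

lemma hd_update_valleys: "T \<noteq> [] \<Longrightarrow> hd (update_valleys f w T) = hd T"
  using hd_conv_nth[of T] hd_conv_nth[of "update_valleys f w T"]
  by (simp add: update_valleys_nth swap_pos_def flip: length_greater_0_conv)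

lemma last_update_valleys: "length T = Suc (length w) \<Longrightarrow> last (update_valleys f w T) = last T"
  using last_conv_nth[of T] last_conv_nth[of "update_valleys f w T"]
  by (auto simp: update_valleys_nth swap_pos_def simp flip: length_greater_0_conv)

text \<open>Valleys are never adjacent, so every step of \<open>update_valleys f w T\<close> changes at most one
  of its two entries.\<close>

lemma update_valleys_mem_tableaux:
  assumes T: "T \<in> tableaux d L u" and len: "length w = length u" "length u' = length u"
    and same: "\<And>i. i < length u \<Longrightarrow> \<not> valley w i \<Longrightarrow> \<not> valley w (Suc i) \<Longrightarrow> u'!i = u!i"
    and fit: "\<And>j. valley w j \<Longrightarrow>
      tableau_step d L (u'!(j-1)) (T!(j-1)) (f (T!(j-1)) (T!Suc j) (T!j)) \<and>
      tableau_step d L (u'!j) (f (T!(j-1)) (T!Suc j) (T!j)) (T!Suc j)"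
  shows "update_valleys f w T \<in> tableaux d L u'"
proof -
  let ?T = "update_valleys f w T"
  have lenT: "length T = Suc (length u)" using T by (simp add: mem_tableaux_iff)
  have step: "tableau_step d L (u'!i) (?T!i) (?T!Suc i)" if i: "i < length u" for i
  proof -
    consider "valley w (Suc i)" | "valley w i" | "\<not> valley w i" "\<not> valley w (Suc i)" by blast
    then show ?thesis
    proof cases
      case 1
      then show ?thesis
        using fit[OF 1] swap_pos_not_adjacent[of "\<lambda>b. b" w i] i lenT by (simp add: update_valleys_nth)
    next
      case 2
      then show ?thesis
        using fit[OF 2] swap_pos_not_adjacent[of "\<lambda>b. b" w i] i lenT by (simp add: update_valleys_nth)
    next
      case 3
      then show ?thesis using T same[OF i] i lenT by (simp add: update_valleys_nth mem_tableaux_iff)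
    qed
  qed
  have "staircase d (?T!j)" if "j < length T" for j
    using fit[of j] tableau_step_staircase T that by (auto simp: update_valleys_nth mem_tableaux_iff)
  then show ?thesis using step lenT len by (simp add: mem_tableaux_iff)
qed

lemma update_valleys_cancel:
  assumes len: "length T = Suc (length w)"
    and cancel: "\<And>j. valley w j \<Longrightarrow> g (T!(j-1)) (T!Suc j) (f (T!(j-1)) (T!Suc j) (T!j)) = T!j"
  shows "update_valleys g w (update_valleys f w T) = T"
proof (rule nth_equalityI)
  fix j assume j: "j < length (update_valleys g w (update_valleys f w T))"
  show "update_valleys g w (update_valleys f w T) ! j = T ! j"
  proof (cases "valley w j")
    case True
    then have "\<not> valley w (j-1)" "\<not> valley w (Suc j)" "j - 1 < length T" "Suc j < length T"
      using swap_pos_not_adjacent[of "\<lambda>b. b" w "j-1"] swap_pos_not_adjacent[of "\<lambda>b. b" w j]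
        valley_bounds[OF True] len
      by auto
    then show ?thesis using True j cancel by (simp add: update_valleys_nth)
  qed (use j in \<open>simp add: update_valleys_nth\<close>)
qed simp

definition size_steps :: "bool list \<Rightarrow> int list list \<Rightarrow> (bool \<times> int) list" where
  "size_steps w T = map (\<lambda>j. (w!j, sum_list (T!Suc j) - sum_list (T!j))) [0..<length w]"

lemma length_size_steps [simp]: "length (size_steps w T) = length w"
  by (simp add: size_steps_def)

lemma concat_map_if_singleton: "concat (map (\<lambda>x. if P x then [f x] else []) xs) = map f (filter P xs)"
  by (induction xs) auto

lemma wt_plus_eq_size_steps: "wt_plus w T = map snd (filter fst (size_steps w T))"
  unfolding wt_plus_def size_steps_def by (simp add: concat_map_if_singleton filter_map comp_def)

lemma wt_minus_eq_size_steps: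
  "wt_minus w T = rev (map (\<lambda>p. - snd p) (filter (\<lambda>p. \<not> fst p) (size_steps w T)))"
  unfolding wt_minus_def size_steps_def by (simp add: concat_map_if_singleton filter_map comp_def)

lemma swap_pos_fst_size_steps: "swap_pos fst (size_steps w T) j \<longleftrightarrow> valley w j"
  by (auto simp: swap_pos_def size_steps_def)

lemma size_steps_update_valleys:
  assumes len: "length T = Suc (length w)"
    and sum: "\<And>j. valley w j \<Longrightarrow>
      sum_list (f (T!(j-1)) (T!Suc j) (T!j)) = sum_list (T!(j-1)) + sum_list (T!Suc j) - sum_list (T!j)"
  shows "size_steps (swap_word w) (update_valleys f w T) = swap_pass fst (size_steps w T)"
proof (rule nth_equalityI)
  fix j assume "j < length (size_steps (swap_word w) (update_valleys f w T))"
  then have j: "j < length w" by (simp add: size_steps_def)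
  have rhs: "swap_pass fst (size_steps w T) ! j =
    (if valley w (Suc j) then size_steps w T ! Suc j
     else if valley w j then size_steps w T ! (j-1) else size_steps w T ! j)"
    using swap_pass_nth[of j "size_steps w T" fst] j by (simp add: swap_pos_fst_size_steps)
  consider "valley w (Suc j)" | "valley w j" | "\<not> valley w j" "\<not> valley w (Suc j)" by blast
  then show "size_steps (swap_word w) (update_valleys f w T) ! j = swap_pass fst (size_steps w T) ! j"
  proof cases
    case 1
    then show ?thesis
      using rhs sum[OF 1] swap_pos_not_adjacent[of "\<lambda>b. b" w j] valley_bounds[OF 1]
        valley_letters[OF 1] j len
      by (simp add: size_steps_def update_valleys_nth swap_word_nth)
  next
    case 2
    then show ?thesis
      using rhs sum[OF 2] swap_pos_not_adjacent[of "\<lambda>b. b" w j] valley_bounds[OF 2]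
        valley_letters[OF 2] j len
      by (simp add: size_steps_def update_valleys_nth swap_word_nth)
  next
    case 3
    then show ?thesis using rhs j len by (simp add: size_steps_def update_valleys_nth swap_word_nth)
  qed
qed (simp add: size_steps_def)

lemma valley_word_star: "valley (word_star w) j \<longleftrightarrow> valley w (length w - j)"
  by (auto simp: swap_pos_def word_star_def rev_nth Suc_diff_Suc)

lemma swap_word_word_star: "swap_word (word_star w) = word_star (swap_word w)"
proof (rule nth_equalityI)
  fix j assume "j < length (swap_word (word_star w))"
  then have j: "j < length w" by (simp add: word_star_def)
  define i where "i = length w - Suc j"
  have i: "i < length w" "length w - j = Suc i" "length w - Suc j = i" using j unfolding i_def by auto
  show "swap_word (word_star w) ! j = word_star (swap_word w) ! j"
    using swap_word_nth[of j "word_star w"] swap_word_nth[OF i(1)] valley_word_star[of w j]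
      valley_word_star[of w "Suc j"] swap_pos_not_adjacent[of "\<lambda>b. b" w i] i j
    by (auto simp: word_star_def rev_nth)
qed (simp add: word_star_def)

lemma update_valleys_rev:
  assumes len: "length T = Suc (length w)" and sym: "\<And>a b. f a b = f b a"
  shows "update_valleys f (word_star w) (rev T) = rev (update_valleys f w T)"
proof (rule nth_equalityI)
  fix j assume "j < length (update_valleys f (word_star w) (rev T))"
  then have j: "j \<le> length w" using len by simp
  have rev_T: "k \<le> length w \<Longrightarrow> rev T ! k = T ! (length w - k)" for k
    using len by (simp add: rev_nth)
  show "update_valleys f (word_star w) (rev T) ! j = rev (update_valleys f w T) ! j"
  proof (cases "valley w (length w - j)")
    case True
    then have "0 < j" "j < length w" using valley_bounds[OF True] by auto
    then show ?thesis
      using True j len rev_T[of "j-1"] rev_T[of "Suc j"] rev_T[of j] sym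
      by (simp add: update_valleys_nth valley_word_star rev_nth Suc_diff_Suc Suc_diff_le)
  next
    case False
    then show ?thesis using j len rev_T[of j] by (simp add: update_valleys_nth valley_word_star rev_nth)
  qed
qed simp

lemma swap_word_at_valley: "valley w j \<Longrightarrow> swap_word w ! (j-1) \<and> \<not> swap_word w ! j"
  using swap_word_nth[of "j-1" w] swap_word_nth[of j w] valley_bounds[of w j]
    swap_pos_not_adjacent[of "\<lambda>b. b" w j]
  by auto

lemma tableau_step_around:
  assumes "T \<in> tableaux d L u" "0 < j" "j < length u"
  shows "tableau_step d L (u!(j-1)) (T!(j-1)) (T!j) \<and> tableau_step d L (u!j) (T!j) (T!Suc j)"
  using assms by (auto simp: mem_tableaux_iff dest!: spec[of _ "j-1"])

lemma valley_entry_lower: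
  assumes "T \<in> tableaux d L w" "valley w j"
  shows "prec_dL d L (T!j) (T!(j-1)) \<and> prec_dL d L (T!j) (T!Suc j)"
  using tableau_step_around[OF assms(1)] valley_bounds[OF assms(2)] valley_letters[OF assms(2)]
  by (simp add: tableau_step_def)

lemma valley_entry_upper:
  assumes "T \<in> tableaux d L (swap_word w)" "valley w j"
  shows "prec_dL d L (T!(j-1)) (T!j) \<and> prec_dL d L (T!Suc j) (T!j)"
  using tableau_step_around[OF assms(1)] valley_bounds[OF assms(2)] swap_word_at_valley[OF assms(2)]
  by (simp add: tableau_step_def)

context
  fixes d L :: nat
  assumes d_pos: "d > 0" and L_pos: "L > 0"
begin

lemma update_valleys_local_bij_mem:
  assumes T: "T \<in> tableaux d L w"
  shows "update_valleys (local_bij d L) w T \<in> tableaux d L (swap_word w)"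
proof (rule update_valleys_mem_tableaux[OF T])
  fix j assume j: "valley w j"
  show "tableau_step d L (swap_word w ! (j-1)) (T!(j-1)) (local_bij d L (T!(j-1)) (T!Suc j) (T!j)) \<and>
    tableau_step d L (swap_word w ! j) (local_bij d L (T!(j-1)) (T!Suc j) (T!j)) (T!Suc j)"
    using local_bij_upper[OF d_pos L_pos] valley_entry_lower[OF T j] swap_word_at_valley[OF j]
    by (simp add: tableau_step_def)
qed (simp_all add: swap_word_nth)

lemma update_valleys_local_bij_inv_mem:
  assumes T: "T \<in> tableaux d L (swap_word w)"
  shows "update_valleys (local_bij_inv d L) w T \<in> tableaux d L w"
proof (rule update_valleys_mem_tableaux[OF T])
  fix j assume j: "valley w j"
  show "tableau_step d L (w ! (j-1)) (T!(j-1)) (local_bij_inv d L (T!(j-1)) (T!Suc j) (T!j)) \<and>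
    tableau_step d L (w ! j) (local_bij_inv d L (T!(j-1)) (T!Suc j) (T!j)) (T!Suc j)"
    using local_bij_inv_lower[OF d_pos L_pos] valley_entry_upper[OF T j] valley_letters[OF j]
    by (simp add: tableau_step_def)
qed (simp_all add: swap_word_nth)

lemma bij_betw_update_valleys_local_bij:
  "bij_betw (update_valleys (local_bij d L) w) (tableaux d L w) (tableaux d L (swap_word w))"
proof (rule bij_betw_byWitness[where f'="update_valleys (local_bij_inv d L) w"])
  show "\<forall>T\<in>tableaux d L w. update_valleys (local_bij_inv d L) w (update_valleys (local_bij d L) w T) = T"
    using local_bij_inv_local_bij[OF d_pos L_pos] valley_entry_lower
    by (auto intro!: update_valleys_cancel simp: mem_tableaux_iff)
  show "\<forall>T\<in>tableaux d L (swap_word w). update_valleys (local_bij d L) w (update_valleys (local_bij_inv d L) w T) = T"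
    using local_bij_local_bij_inv[OF d_pos L_pos] valley_entry_upper
    by (auto intro!: update_valleys_cancel simp: mem_tableaux_iff)
qed (use update_valleys_local_bij_mem update_valleys_local_bij_inv_mem in blast)+

lemma update_valleys_local_bij_invariants:
  assumes T: "T \<in> tableaux d L w"
  defines "T' \<equiv> update_valleys (local_bij d L) w T"
  shows "hd T' = hd T \<and> last T' = last T \<and>
    wt_plus (swap_word w) T' = wt_plus w T \<and> wt_minus (swap_word w) T' = wt_minus w T"
proof -
  have len: "length T = Suc (length w)" using T by (simp add: mem_tableaux_iff)
  then have "T \<noteq> []" by auto
  have "size_steps (swap_word w) T' = swap_pass fst (size_steps w T)"
    unfolding T'_def
    using sum_local_bij[OF d_pos L_pos] valley_entry_lower[OF T] by (intro size_steps_update_valleys[OF len]) auto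
  then show ?thesis
    using hd_update_valleys[OF \<open>T \<noteq> []\<close>] last_update_valleys[OF len]
    by (auto simp: T'_def wt_plus_eq_size_steps wt_minus_eq_size_steps filter_swap_pass filter_not_swap_pass)
qed

end

subsection \<open>Sorting the type word\<close>

fun swap_iter :: "nat \<Rightarrow> nat \<Rightarrow> nat \<Rightarrow> bool list \<Rightarrow> int list list \<Rightarrow> int list list" where
  "swap_iter d L 0 w T = T"
| "swap_iter d L (Suc k) w T = swap_iter d L k (swap_word w) (update_valleys (local_bij d L) w T)"

lemma swap_iter_rev:
  "length T = Suc (length w) \<Longrightarrow> swap_iter d L k (word_star w) (rev T) = rev (swap_iter d L k w T)"
proof (induction k arbitrary: w T)
  case (Suc k)
  have "length (update_valleys (local_bij d L) w T) = Suc (length (swap_word w))"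
    using Suc.prems by simp
  then show ?case
    using Suc.IH update_valleys_rev[OF Suc.prems local_bij_symmetric] by (simp add: swap_word_word_star)
qed simp

context
  fixes d L :: nat
  assumes d_pos: "d > 0" and L_pos: "L > 0"
begin

lemma bij_betw_swap_iter: "bij_betw (swap_iter d L k w) (tableaux d L w) (tableaux d L ((swap_word ^^ k) w))"
proof (induction k arbitrary: w)
  case (Suc k)
  have "swap_iter d L (Suc k) w = swap_iter d L k (swap_word w) \<circ> update_valleys (local_bij d L) w"
    by (rule ext) simp
  moreover have "(swap_word ^^ Suc k) w = (swap_word ^^ k) (swap_word w)"
    by (simp only: funpow_Suc_right o_apply)
  ultimately show ?case
    using bij_betw_trans[OF bij_betw_update_valleys_local_bij[OF d_pos L_pos] Suc.IH] by (simp only:)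
qed (simp add: bij_betw_def inj_on_def)

lemma swap_iter_invariants:
  "T \<in> tableaux d L w \<Longrightarrow>
   hd (swap_iter d L k w T) = hd T \<and> last (swap_iter d L k w T) = last T \<and>
   wt_plus ((swap_word ^^ k) w) (swap_iter d L k w T) = wt_plus w T \<and>
   wt_minus ((swap_word ^^ k) w) (swap_iter d L k w T) = wt_minus w T"
proof (induction k arbitrary: w T)
  case (Suc k)
  then show ?case
    using Suc.IH[OF update_valleys_local_bij_mem[OF d_pos L_pos Suc.prems]]
      update_valleys_local_bij_invariants[OF d_pos L_pos Suc.prems]
    by (simp add: funpow_Suc_right del: funpow.simps)
qed simp

end

definition canonical_word :: "bool list \<Rightarrow> bool list" where
  "canonical_word w = replicate (count_list w True) True @ replicate (count_list w False) False"

text \<open>\<open>plus_index_sum w\<close> is the sum of the positions of the letters \<open>+\<close> in \<open>w\<close>; \<open>swap_word\<close>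
  moves each of the \<open>+\<close> at a valley one place to the left.\<close>

fun plus_index_sum :: "bool list \<Rightarrow> nat" where
  "plus_index_sum [] = 0"
| "plus_index_sum (x # xs) = plus_index_sum xs + count_list xs True"

lemma plus_index_sum_le: "plus_index_sum w \<le> length w * length w"
proof (induction w)
  case (Cons x w)
  then show ?case using count_le_length[of w True] by simp
qed simp

lemma plus_index_sum_swap_word:
  "plus_index_sum (swap_word w) + (if swap_word w = w then 0 else 1) \<le> plus_index_sum w"
proof (induction "\<lambda>b::bool. b" w rule: swap_pass.induct)
  case (1 x y r)
  show ?case
  proof (cases "\<not> x \<and> y")
    case True
    then have "plus_index_sum (swap_word r) \<le> plus_index_sum r"
      using "1.hyps"(1) by (auto split: if_splits)
    then show ?thesis using True count_list_swap_pass[of _ r True] by simp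
  next
    case False
    then show ?thesis
      using "1.hyps"(2) count_list_swap_pass[of _ "y # r" True] by (auto split: if_splits)
  qed
qed auto

lemma canonical_word_if_no_valley: "(\<And>j. \<not> valley w j) \<Longrightarrow> w = canonical_word w"
proof (induction w)
  case (Cons x xs)
  have "\<not> valley xs j" for j
    using Cons.prems[of "Suc j"] by (cases j) (auto simp: swap_pos_Cons_Suc)
  then have xs: "xs = canonical_word xs" using Cons.IH by blast
  show ?case
  proof (cases x)
    case False
    have "count_list xs True = 0"
    proof (rule ccontr)
      assume "count_list xs True \<noteq> 0"
      then obtain c where "count_list xs True = Suc c" using not0_implies_Suc by blast
      then have "xs = True # replicate c True @ replicate (count_list xs False) False"
        using xs by (simp add: canonical_word_def)
      then have "xs \<noteq> [] \<and> hd xs" by (metis list.distinct(1) list.sel(1))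
      then show False using Cons.prems[of 1] False by (simp add: swap_pos_Cons_Suc)
    qed
    then show ?thesis using xs False by (simp add: canonical_word_def)
  qed (use xs in \<open>simp add: canonical_word_def\<close>)
qed (simp add: canonical_word_def)

lemma swap_word_funpow_canonical: "(swap_word ^^ Suc (length w * length w)) w = canonical_word w"
proof -
  define n where "n = Suc (length w * length w)"
  have progress: "plus_index_sum ((swap_word ^^ k) w) + k \<le> plus_index_sum w \<or>
      swap_word ((swap_word ^^ k) w) = (swap_word ^^ k) w" for k
  proof (induction k)
    case (Suc k)
    then show ?case
      using plus_index_sum_swap_word[of "(swap_word ^^ k) w"]
      by (cases "swap_word ((swap_word ^^ k) w) = (swap_word ^^ k) w") auto
  qed simp
  moreover have "\<not> plus_index_sum ((swap_word ^^ n) w) + n \<le> plus_index_sum w"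
    using plus_index_sum_le[of w] unfolding n_def by linarith
  ultimately have fixed: "swap_word ((swap_word ^^ n) w) = (swap_word ^^ n) w" by blast
  have "\<not> valley ((swap_word ^^ n) w) j" for j
    using fixed swap_word_at_valley valley_letters by metis
  moreover have "count_list ((swap_word ^^ k) w) b = count_list w b" for k b
    by (induction k) (simp_all add: count_list_swap_pass)
  ultimately show ?thesis
    using canonical_word_if_no_valley unfolding n_def canonical_word_def by metis
qed

definition normal_form :: "nat \<Rightarrow> nat \<Rightarrow> bool list \<Rightarrow> int list list \<Rightarrow> int list list" where
  "normal_form d L w = swap_iter d L (Suc (length w * length w)) w"

lemma normal_form_rev:
  "length T = Suc (length w) \<Longrightarrow> normal_form d L (word_star w) (rev T) = rev (normal_form d L w T)"
  using swap_iter_rev[of T w d L] by (simp add: normal_form_def word_star_def del: swap_iter.simps)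

definition transfer :: "nat \<Rightarrow> nat \<Rightarrow> bool list \<Rightarrow> bool list \<Rightarrow> int list list \<Rightarrow> int list list" where
  "transfer d L w v T = inv_into (tableaux d L v) (normal_form d L v) (normal_form d L w T)"

context
  fixes d L :: nat
  assumes d_pos: "d > 0" and L_pos: "L > 0"
begin

lemma bij_betw_normal_form: "bij_betw (normal_form d L w) (tableaux d L w) (tableaux d L (canonical_word w))"
  using bij_betw_swap_iter[OF d_pos L_pos] swap_word_funpow_canonical unfolding normal_form_def by metis

lemma normal_form_invariants:
  "T \<in> tableaux d L w \<Longrightarrow>
   hd (normal_form d L w T) = hd T \<and> last (normal_form d L w T) = last T \<and>
   wt_plus (canonical_word w) (normal_form d L w T) = wt_plus w T \<and>
   wt_minus (canonical_word w) (normal_form d L w T) = wt_minus w T"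
  using swap_iter_invariants[OF d_pos L_pos] swap_word_funpow_canonical unfolding normal_form_def by metis

context
  fixes w v :: "bool list"
  assumes same_canonical: "canonical_word w = canonical_word v"
begin

lemma bij_betw_transfer: "bij_betw (transfer d L w v) (tableaux d L w) (tableaux d L v)"
proof -
  have "transfer d L w v = inv_into (tableaux d L v) (normal_form d L v) \<circ> normal_form d L w"
    by (rule ext) (simp add: transfer_def)
  moreover have "bij_betw (normal_form d L w) (tableaux d L w) (tableaux d L (canonical_word v))"
    using bij_betw_normal_form[of w] same_canonical by simp
  ultimately show ?thesis
    using bij_betw_trans[OF _ bij_betw_inv_into[OF bij_betw_normal_form[of v]]] by simp
qed

lemma normal_form_transfer:
  assumes "T \<in> tableaux d L w"
  shows "normal_form d L v (transfer d L w v T) = normal_form d L w T"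
  using assms bij_betw_normal_form[of v] bij_betwE[OF bij_betw_normal_form[of w]] same_canonical
  unfolding transfer_def by (metis bij_betw_inv_into_right)

lemma transfer_invariants:
  assumes "T \<in> tableaux d L w"
  shows "hd (transfer d L w v T) = hd T \<and> last (transfer d L w v T) = last T \<and>
    wt_plus v (transfer d L w v T) = wt_plus w T \<and> wt_minus v (transfer d L w v T) = wt_minus w T"
  using normal_form_invariants[OF assms] normal_form_invariants[OF bij_betw_apply[OF bij_betw_transfer assms]]
    normal_form_transfer[OF assms] same_canonical
  by metis

lemma transfer_rev:
  assumes T: "T \<in> tableaux d L w"
  shows "transfer d L (word_star w) (word_star v) (rev T) = rev (transfer d L w v T)"
proof -
  let ?x = "transfer d L w v T"
  have x: "?x \<in> tableaux d L v" using bij_betw_apply[OF bij_betw_transfer T] .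
  have "transfer d L (word_star w) (word_star v) (rev T) =
      inv_into (tableaux d L (word_star v)) (normal_form d L (word_star v)) (normal_form d L (word_star w) (rev T))"
    by (simp only: transfer_def)
  also have "normal_form d L (word_star w) (rev T) = normal_form d L (word_star v) (rev ?x)"
    using normal_form_rev normal_form_transfer[OF T] T x by (simp add: mem_tableaux_iff)
  also have "inv_into (tableaux d L (word_star v)) (normal_form d L (word_star v)) \<dots> = rev ?x"
    using bij_betw_inv_into_left[OF bij_betw_normal_form rev_mem_tableaux[OF x]] .
  finally show ?thesis .
qed

end

end

theorem theorem8p9:
  fixes d L :: nat
  assumes "d > 0" and "L > 0"
  shows "\<exists>Psi :: bool list \<Rightarrow> bool list \<Rightarrow> int list list \<Rightarrow> int list list.
    \<forall>w v. count_list w True = count_list v True \<and> count_list w False = count_list v False \<longrightarrow>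
      bij_betw (Psi w v) (tableaux d L w) (tableaux d L v) \<and>
      (\<forall>T\<in>tableaux d L w.
          hd (Psi w v T) = hd T \<and> last (Psi w v T) = last T \<and>
          wt_plus v (Psi w v T) = wt_plus w T \<and> wt_minus v (Psi w v T) = wt_minus w T \<and>
          Psi (word_star w) (word_star v) (rev T) = rev (Psi w v T))"
proof (intro exI[of _ "transfer d L"] allI impI conjI ballI)
  fix w v :: "bool list"
  assume "count_list w True = count_list v True \<and> count_list w False = count_list v False"
  then have same: "canonical_word w = canonical_word v" by (simp add: canonical_word_def)
  show "bij_betw (transfer d L w v) (tableaux d L w) (tableaux d L v)"
    using bij_betw_transfer[OF assms same] .
  fix T assume T: "T \<in> tableaux d L w"
  show "hd (transfer d L w v T) = hd T" "last (transfer d L w v T) = last T"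
    "wt_plus v (transfer d L w v T) = wt_plus w T" "wt_minus v (transfer d L w v T) = wt_minus w T"
    using transfer_invariants[OF assms same T] by simp_all
  show "transfer d L (word_star w) (word_star v) (rev T) = rev (transfer d L w v T)"
    using transfer_rev[OF assms same T] .
qed

end
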